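(* Let $n\ge 4$, distances $d_{ij}>0$, $e_{ij}=\tan^{-1}(d_{ij})$, and fix $\beta$ with $\sin(\pi\beta)\neq 0$. Fix a state $(s,d,e,t)$ and two distinct unexplored nodes $a,b\neq t$, and let $\gamma^\#>0$ satisfy $\cos(\gamma^\# e_{ab})=0$. For $c\in\{a,b\}$ define $$g_c(\gamma)=d_{tc}\sin(\pi\beta)\sin(\gamma e_{tc})\prod_{k\in\{1,\dots,n\}\setminus\{t,a,b\}}\cos(\gamma e_{ck}),$$ so that $Q((s,d,e,t),c;(\gamma,\beta))=\cos(\gamma e_{ab})\,g_c(\gamma)$. Assume $g_a(\gamma^\#)\neq g_b(\gamma^\#)$. Then there exists $\delta>0$ such that for every $\varepsilon\in(0,\delta)$: (i) the relative order of the Q-values of $a$ and $b$ inverts across $\gamma^\#$: $\operatorname{sign}\big(Q(\cdot,a;(\gamma^\#-\varepsilon,\beta))-Q(\cdot,b;(\gamma^\#-\varepsilon,\beta))\big)=-\operatorname{sign}\big(Q(\cdot,a;(\gamma^\#+\varepsilon,\beta))-Q(\cdot,b;(\gamma^\#+\varepsilon,\beta))\big)\neq 0$; (ii) if $a$ (resp. $b$) is a maximizer of the Q-values over unexplored nodes at $\gamma^\#-\varepsilon$ (or at $\gamma^\#+\varepsilon$), then it is not a maximizer at the other parameter value $\gamma^\#\pm\varepsilon$; in particular the greedy policy is policy critical at $\gamma^\#$, i.e. $\pi((s,d,e,t);(\gamma^\#-\varepsilon,\beta))\neq\pi((s,d,e,t);(\gamma^\#+\varepsilon,\beta))$.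
   Context: TSP instance: $n$ nodes, $d_{ij}=d_{ji}>0$ is the Euclidean distance between nodes $i\neq j$, and scaled edge weights $e_{ij}=\tan^{-1}(d_{ij})$. A state is a tuple $(s,d,e,t)$ with $s\in\{0,\pi\}^n$, $s_i=\pi$ iff node $i$ is unvisited, and $t$ the current node. The depth-1 EQC Q-value for moving to unexplored $a\neq t$ is $Q((s,d,e,t),a;(\gamma,\beta)) = d_{ta}\sin(\pi\beta)\sin(\gamma e_{ta})\prod_{k\in\{1,\dots,n\}\setminus\{t,a\}}\cos(\gamma e_{ak})$, and the greedy policy $\pi((s,d,e,t);(\gamma,\beta))$ is a maximizer of this Q-value over unexplored nodes. The policy is called critical at $\gamma_0$ (for a given $\delta>0$) if $\pi((s,d,e,t);(\gamma_0-\delta,\beta))\neq\pi((s,d,e,t);(\gamma_0+\delta,\beta))$. *)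

theory Defs
  imports Complex_Main
begin

text \<open>Nodes are 1..n. d is the distance function, e the scaled edge weights,
  t the current node. The depth-1 EQC Q-value for moving to node a.\<close>

definition Q :: "nat \<Rightarrow> (nat \<Rightarrow> nat \<Rightarrow> real) \<Rightarrow> (nat \<Rightarrow> nat \<Rightarrow> real) \<Rightarrow> nat \<Rightarrow> nat
    \<Rightarrow> real \<Rightarrow> real \<Rightarrow> real" where
  "Q n d e t a \<gamma> \<beta> =
     d t a * sin (pi * \<beta>) * sin (\<gamma> * e t a) *
     (\<Prod>k\<in>{1..n} - {t, a}. cos (\<gamma> * e a k))"

text \<open>Unexplored candidate nodes: s i = pi (unvisited) and i different from t.\<close>

definition unexplored :: "nat \<Rightarrow> (nat \<Rightarrow> real) \<Rightarrow> nat \<Rightarrow> nat set" where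
  "unexplored n s t = {i \<in> {1..n}. s i = pi \<and> i \<noteq> t}"

definition is_greedy :: "nat \<Rightarrow> (nat \<Rightarrow> real) \<Rightarrow> (nat \<Rightarrow> nat \<Rightarrow> real) \<Rightarrow> (nat \<Rightarrow> nat \<Rightarrow> real)
    \<Rightarrow> nat \<Rightarrow> real \<Rightarrow> real \<Rightarrow> nat \<Rightarrow> bool" where
  "is_greedy n s d e t \<gamma> \<beta> a \<longleftrightarrow>
     a \<in> unexplored n s t \<and> (\<forall>b \<in> unexplored n s t. Q n d e t b \<gamma> \<beta> \<le> Q n d e t a \<gamma> \<beta>)"

definition g :: "nat \<Rightarrow> (nat \<Rightarrow> nat \<Rightarrow> real) \<Rightarrow> (nat \<Rightarrow> nat \<Rightarrow> real) \<Rightarrow> nat \<Rightarrow> nat \<Rightarrow> nat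
    \<Rightarrow> nat \<Rightarrow> real \<Rightarrow> real \<Rightarrow> real" where
  "g n d e t a b c \<gamma> \<beta> =
     d t c * sin (pi * \<beta>) * sin (\<gamma> * e t c) *
     (\<Prod>k\<in>{1..n} - {t, a, b}. cos (\<gamma> * e c k))"

end

theory Submission
  imports Defs
begin

text \<open>Among the factors of \<open>Q(a)\<close> and \<open>Q(b)\<close> only \<open>cos (\<gamma> e\<^sub>a\<^sub>b)\<close> is shared, so
  \<open>Q(a) - Q(b) = cos (\<gamma> e\<^sub>a\<^sub>b) (g\<^sub>a - g\<^sub>b)\<close>. Near \<open>\<gamma>\<^sup>#\<close> the continuous factor
  \<open>g\<^sub>a - g\<^sub>b\<close> keeps the nonzero sign it has at \<open>\<gamma>\<^sup>#\<close>, whereas the cosine has a simple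
  zero there and changes sign. Hence \<open>Q(a) - Q(b)\<close> has opposite nonzero signs at
  \<open>\<gamma>\<^sup># \<plusminus> \<epsilon>\<close>, and a node of \<open>{a, b}\<close> that is greedy on one side is beaten by the
  other node on the other side.\<close>

lemma cos_mult_sign_change:
  fixes x u :: real
  assumes "cos x = 0" and "0 < u" and "u < pi"
  shows "cos (x - u) * cos (x + u) < 0"
proof -
  have "sin x \<noteq> 0"
    using sin_cos_squared_add[of x] assms(1) by auto
  moreover have "sin u > 0"
    using assms(2,3) by (rule sin_gt_zero)
  moreover have "cos (x - u) * cos (x + u) = - (sin x * sin u)\<^sup>2"
    by (simp add: cos_diff cos_add assms(1) power2_eq_square)
  ultimately show ?thesis
    by simp
qed

lemma isCont_sign_preserving:
  fixes f :: "real \<Rightarrow> real"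
  assumes "isCont f x" and "f x \<noteq> 0"
  shows "\<exists>\<delta>>0. \<forall>y. \<bar>y - x\<bar> < \<delta> \<longrightarrow> f y * f x > 0"
proof -
  have "((\<lambda>y. f y * f x) \<longlongrightarrow> f x * f x) (nhds x)"
    using assms(1) by (intro tendsto_intros) (simp add: isCont_def tendsto_at_iff_tendsto_nhds)
  moreover have "f x * f x > 0"
    using assms(2) by (metis not_real_square_gt_zero)
  ultimately have "eventually (\<lambda>y. f y * f x > 0) (nhds x)"
    by (rule order_tendstoD)
  then show ?thesis
    by (simp add: eventually_nhds_metric dist_real_def)
qed

lemma cos_mult_sign_change_near:
  fixes h :: "real \<Rightarrow> real" and x0 E :: real
  assumes "isCont h x0" and "h x0 \<noteq> 0" and "cos (x0 * E) = 0" and "E > 0"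
  shows "\<exists>\<delta>>0. \<forall>\<epsilon>. 0 < \<epsilon> \<and> \<epsilon> < \<delta> \<longrightarrow>
           (cos ((x0 - \<epsilon>) * E) * h (x0 - \<epsilon>)) * (cos ((x0 + \<epsilon>) * E) * h (x0 + \<epsilon>)) < 0"
proof -
  obtain \<delta>1 where "\<delta>1 > 0" and sign_h: "\<And>y. \<bar>y - x0\<bar> < \<delta>1 \<Longrightarrow> h y * h x0 > 0"
    using isCont_sign_preserving[OF assms(1,2)] by blast
  have "0 < \<epsilon> \<and> \<epsilon> < min \<delta>1 (pi / E) \<longrightarrow>
      (cos ((x0 - \<epsilon>) * E) * h (x0 - \<epsilon>)) * (cos ((x0 + \<epsilon>) * E) * h (x0 + \<epsilon>)) < 0" for \<epsilon>
  proof
    assume \<epsilon>: "0 < \<epsilon> \<and> \<epsilon> < min \<delta>1 (pi / E)"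
    then have "cos (x0 * E - \<epsilon> * E) * cos (x0 * E + \<epsilon> * E) < 0"
      using assms(3,4) by (intro cos_mult_sign_change) (auto simp: field_simps)
    then have cos_neg: "cos ((x0 - \<epsilon>) * E) * cos ((x0 + \<epsilon>) * E) < 0"
      by (simp add: algebra_simps)
    have "(h (x0 - \<epsilon>) * h (x0 + \<epsilon>)) * (h x0 * h x0) > 0"
      using mult_pos_pos[OF sign_h[of "x0 - \<epsilon>"] sign_h[of "x0 + \<epsilon>"]] \<epsilon>
      by (simp add: mult_ac)
    then have h_pos: "h (x0 - \<epsilon>) * h (x0 + \<epsilon>) > 0"
      using assms(2) by (simp add: zero_less_mult_iff)
    have "(cos ((x0 - \<epsilon>) * E) * h (x0 - \<epsilon>)) * (cos ((x0 + \<epsilon>) * E) * h (x0 + \<epsilon>))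
        = (cos ((x0 - \<epsilon>) * E) * cos ((x0 + \<epsilon>) * E)) * (h (x0 - \<epsilon>) * h (x0 + \<epsilon>))"
      by (simp only: mult_ac)
    also have "\<dots> < 0"
      using cos_neg h_pos by (rule mult_neg_pos)
    finally show "(cos ((x0 - \<epsilon>) * E) * h (x0 - \<epsilon>)) * (cos ((x0 + \<epsilon>) * E) * h (x0 + \<epsilon>)) < 0" .
  qed
  moreover have "min \<delta>1 (pi / E) > 0"
    using \<open>\<delta>1 > 0\<close> assms(4) by simp
  ultimately show ?thesis
    by blast
qed

lemma isCont_g: "isCont (\<lambda>\<gamma>. g n d e t a b c \<gamma> \<beta>) \<gamma>0"
  unfolding g_def by (intro continuous_intros)

lemma g_swap: "g n d e t a b c \<gamma> \<beta> = g n d e t b a c \<gamma> \<beta>"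
  unfolding g_def by (simp add: insert_commute)

lemma Q_eq_cos_mult_g:
  assumes "b \<in> {1..n}" and "b \<noteq> t" and "b \<noteq> a"
  shows "Q n d e t a \<gamma> \<beta> = cos (\<gamma> * e a b) * g n d e t a b a \<gamma> \<beta>"
proof -
  have "{1..n} - {t, a} = insert b ({1..n} - {t, a, b})"
    using assms by blast
  then have "(\<Prod>k\<in>{1..n} - {t, a}. cos (\<gamma> * e a k))
      = cos (\<gamma> * e a b) * (\<Prod>k\<in>{1..n} - {t, a, b}. cos (\<gamma> * e a k))"
    by simp
  then show ?thesis
    unfolding Q_def g_def by (simp only: mult_ac)
qed

lemma Q_diff_eq_cos_mult_g_diff:
  assumes "a \<in> {1..n}" "b \<in> {1..n}" "a \<noteq> t" "b \<noteq> t" "a \<noteq> b" and "e b a = e a b"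
  shows "Q n d e t a \<gamma> \<beta> - Q n d e t b \<gamma> \<beta>
           = cos (\<gamma> * e a b) * (g n d e t a b a \<gamma> \<beta> - g n d e t a b b \<gamma> \<beta>)"
  using Q_eq_cos_mult_g[of b n t a] Q_eq_cos_mult_g[of a n t b] assms
  by (simp add: g_swap[of n d e t b a] right_diff_distrib)

lemma greedy_excluded_by_sign_change:
  assumes "a \<in> unexplored n s t" and "b \<in> unexplored n s t" and "c \<in> {a, b}"
    and "(Q n d e t a \<gamma>1 \<beta> - Q n d e t b \<gamma>1 \<beta>) * (Q n d e t a \<gamma>2 \<beta> - Q n d e t b \<gamma>2 \<beta>) < 0"
  shows "\<not> (is_greedy n s d e t \<gamma>1 \<beta> c \<and> is_greedy n s d e t \<gamma>2 \<beta> c)"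
proof
  assume "is_greedy n s d e t \<gamma>1 \<beta> c \<and> is_greedy n s d e t \<gamma>2 \<beta> c"
  then have "Q n d e t a \<gamma>1 \<beta> \<le> Q n d e t c \<gamma>1 \<beta>" "Q n d e t b \<gamma>1 \<beta> \<le> Q n d e t c \<gamma>1 \<beta>"
    "Q n d e t a \<gamma>2 \<beta> \<le> Q n d e t c \<gamma>2 \<beta>" "Q n d e t b \<gamma>2 \<beta> \<le> Q n d e t c \<gamma>2 \<beta>"
    using assms(1,2) unfolding is_greedy_def by auto
  with assms(3,4) show False
    by (auto simp: mult_less_0_iff)
qed

theorem proposition1:
  fixes n :: nat and d e :: "nat \<Rightarrow> nat \<Rightarrow> real" and s :: "nat \<Rightarrow> real"
    and t a b :: nat and \<beta> \<gamma>0 :: real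
  assumes n4: "n \<ge> 4"
    and dpos: "\<And>i j. i \<in> {1..n} \<Longrightarrow> j \<in> {1..n} \<Longrightarrow> i \<noteq> j \<Longrightarrow> d i j > 0"
    and dsym: "\<And>i j. i \<in> {1..n} \<Longrightarrow> j \<in> {1..n} \<Longrightarrow> d i j = d j i"
    and edef: "\<And>i j. e i j = arctan (d i j)"
    and s_vals: "\<And>i. i \<in> {1..n} \<Longrightarrow> s i = 0 \<or> s i = pi"
    and t_node: "t \<in> {1..n}"
    and a_unexp: "a \<in> unexplored n s t"
    and b_unexp: "b \<in> unexplored n s t"
    and ab: "a \<noteq> b"
    and beta: "sin (pi * \<beta>) \<noteq> 0"
    and gpos: "\<gamma>0 > 0"
    and gcos: "cos (\<gamma>0 * e a b) = 0"
    and gdiff: "g n d e t a b a \<gamma>0 \<beta> \<noteq> g n d e t a b b \<gamma>0 \<beta>"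
  shows "\<exists>\<delta>>0. \<forall>\<epsilon>. 0 < \<epsilon> \<and> \<epsilon> < \<delta> \<longrightarrow>
     (sgn (Q n d e t a (\<gamma>0 - \<epsilon>) \<beta> - Q n d e t b (\<gamma>0 - \<epsilon>) \<beta>)
        = - sgn (Q n d e t a (\<gamma>0 + \<epsilon>) \<beta> - Q n d e t b (\<gamma>0 + \<epsilon>) \<beta>)
      \<and> sgn (Q n d e t a (\<gamma>0 + \<epsilon>) \<beta> - Q n d e t b (\<gamma>0 + \<epsilon>) \<beta>) \<noteq> 0)
   \<and> (\<forall>c\<in>{a, b}.
        (is_greedy n s d e t (\<gamma>0 - \<epsilon>) \<beta> c \<longrightarrow> \<not> is_greedy n s d e t (\<gamma>0 + \<epsilon>) \<beta> c)
      \<and> (is_greedy n s d e t (\<gamma>0 + \<epsilon>) \<beta> c \<longrightarrow> \<not> is_greedy n s d e t (\<gamma>0 - \<epsilon>) \<beta> c))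
   \<and> (\<forall>p1 p2. is_greedy n s d e t (\<gamma>0 - \<epsilon>) \<beta> p1 \<and> is_greedy n s d e t (\<gamma>0 + \<epsilon>) \<beta> p2
        \<and> (p1 \<in> {a, b} \<or> p2 \<in> {a, b}) \<longrightarrow> p1 \<noteq> p2)"
proof -
  have nodes: "a \<in> {1..n}" "b \<in> {1..n}" "a \<noteq> t" "b \<noteq> t"
    using a_unexp b_unexp by (auto simp: unexplored_def)
  then have "e b a = e a b" and "e a b > 0"
    using edef dsym dpos ab by auto
  define h where "h \<gamma> = g n d e t a b a \<gamma> \<beta> - g n d e t a b b \<gamma> \<beta>" for \<gamma>
  have "isCont h \<gamma>0"
    unfolding h_def by (intro continuous_intros isCont_g)
  moreover have "h \<gamma>0 \<noteq> 0"
    unfolding h_def using gdiff by simp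
  ultimately obtain \<delta> where "\<delta> > 0" and flip: "\<And>\<epsilon>. 0 < \<epsilon> \<and> \<epsilon> < \<delta> \<Longrightarrow>
      (Q n d e t a (\<gamma>0 - \<epsilon>) \<beta> - Q n d e t b (\<gamma>0 - \<epsilon>) \<beta>)
        * (Q n d e t a (\<gamma>0 + \<epsilon>) \<beta> - Q n d e t b (\<gamma>0 + \<epsilon>) \<beta>) < 0"
    using cos_mult_sign_change_near[OF _ _ gcos \<open>e a b > 0\<close>]
    unfolding Q_diff_eq_cos_mult_g_diff[OF nodes ab \<open>e b a = e a b\<close>] h_def by blast
  show ?thesis
  proof (intro exI[of _ \<delta>] conjI allI impI \<open>\<delta> > 0\<close>)
    fix \<epsilon> :: real
    assume "0 < \<epsilon> \<and> \<epsilon> < \<delta>"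
    note flip = flip[OF this]
    then show "sgn (Q n d e t a (\<gamma>0 - \<epsilon>) \<beta> - Q n d e t b (\<gamma>0 - \<epsilon>) \<beta>)
        = - sgn (Q n d e t a (\<gamma>0 + \<epsilon>) \<beta> - Q n d e t b (\<gamma>0 + \<epsilon>) \<beta>)"
      and "sgn (Q n d e t a (\<gamma>0 + \<epsilon>) \<beta> - Q n d e t b (\<gamma>0 + \<epsilon>) \<beta>) \<noteq> 0"
      by (auto simp: sgn_if mult_less_0_iff)
    note excluded = greedy_excluded_by_sign_change[OF a_unexp b_unexp _ flip]
    then show "\<forall>c\<in>{a, b}.
        (is_greedy n s d e t (\<gamma>0 - \<epsilon>) \<beta> c \<longrightarrow> \<not> is_greedy n s d e t (\<gamma>0 + \<epsilon>) \<beta> c)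
      \<and> (is_greedy n s d e t (\<gamma>0 + \<epsilon>) \<beta> c \<longrightarrow> \<not> is_greedy n s d e t (\<gamma>0 - \<epsilon>) \<beta> c)"
      by blast
    show "is_greedy n s d e t (\<gamma>0 - \<epsilon>) \<beta> p1 \<and> is_greedy n s d e t (\<gamma>0 + \<epsilon>) \<beta> p2
        \<and> (p1 \<in> {a, b} \<or> p2 \<in> {a, b}) \<Longrightarrow> p1 \<noteq> p2" for p1 p2
      using excluded by blast
  qed
qed

end
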